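(* Let $\vec{\mathcal G}=([n],E)$ be a directed graph with $m=|E|$ edges in which every vertex has at least one outgoing edge and which has at least one directed cycle. For weights $r\in\mathbb R^m$ let $\lambda(r)$ denote the minimum, over all directed cycles $C$ of $\vec{\mathcal G}$, of the mean weight of $C$. Then for every edge $(i,j)\in E$ and every $r_{-ij}\in\mathbb R^{m-1}$, the function $\mathbb R\ni x\mapsto \lambda(x,r_{-ij})$ is continuous, piecewise affine, and has at most $n$ break points.
   Context: The mean weight of a directed cycle is the sum of the weights of its edges divided by its number of edges. For $r\in\mathbb R^m$ and an edge $(i,j)$, $r_{-ij}\in\mathbb R^{m-1}$ is $r$ with the $ij$-th coordinate removed, and $(x,r_{-ij})\in\mathbb R^m$ is $r$ with the $ij$-th coordinate replaced by $x$. *)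

theory Defs
  imports "HOL-Analysis.Analysis"
begin

text \<open>Edge weights r \<in> \<real>^m (m = card E) are represented as a
  function on vertex pairs; only its values on E matter.\<close>

definition is_dcycle :: "(nat \<times> nat) set \<Rightarrow> nat list \<Rightarrow> bool" where
  "is_dcycle E c \<longleftrightarrow> c \<noteq> [] \<and> distinct c \<and>
     (\<forall>t < length c. (c ! t, c ! ((t + 1) mod length c)) \<in> E)"

definition cycle_weight :: "(nat \<times> nat \<Rightarrow> real) \<Rightarrow> nat list \<Rightarrow> real" where
  "cycle_weight r c = (\<Sum>t < length c. r (c ! t, c ! ((t + 1) mod length c)))"

definition cycle_mean :: "(nat \<times> nat \<Rightarrow> real) \<Rightarrow> nat list \<Rightarrow> real" where
  "cycle_mean r c = cycle_weight r c / real (length c)"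

definition min_cycle_mean :: "(nat \<times> nat) set \<Rightarrow> (nat \<times> nat \<Rightarrow> real) \<Rightarrow> real" where
  "min_cycle_mean E r = Min {cycle_mean r c | c. is_dcycle E c}"

definition pw_affine_at_most :: "nat \<Rightarrow> (real \<Rightarrow> real) \<Rightarrow> bool" where
  "pw_affine_at_most N f \<longleftrightarrow> (\<exists>B. finite B \<and> card B \<le> N \<and>
     (\<forall>a b. a < b \<and> {a<..<b} \<inter> B = {} \<longrightarrow>
        (\<exists>c d. \<forall>x \<in> {a<..<b}. f x = c * x + d)))"

end

theory Submission
  imports Defs
begin

text \<open>Changing the weight of the edge (i, j) to x turns the mean weight of every cycle c into an
  affine function of x whose slope is the number of occurrences of (i, j) in c divided by the length
  of c. A directed cycle has distinct vertices, so it uses (i, j) at most once, and its length is at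
  most n; hence the slopes lie in {0} \<union> {1/k | 1 \<le> k \<le> n}. Thus \<lambda> is the minimum of
  finitely many lines with at most n + 1 distinct slopes. Such a minimum is continuous, and
  adding the lines in order of increasing slope creates at most one new break point per slope,
  because the difference between the previous minimum and the new line is monotone.\<close>

lemma pw_affine_at_most_mono:
  "pw_affine_at_most N f \<Longrightarrow> N \<le> M \<Longrightarrow> pw_affine_at_most M f"
  unfolding pw_affine_at_most_def by (meson order_trans)

lemma mono_sign_constant_off_point:
  fixes d :: "real \<Rightarrow> real"
  assumes "mono d"
  shows "\<exists>x0. \<forall>a b. x0 \<notin> {a<..<b} \<longrightarrow>
           (\<forall>x\<in>{a<..<b}. d x \<le> 0) \<or> (\<forall>x\<in>{a<..<b}. 0 \<le> d x)"
proof -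
  define P where "P = {x. d x \<le> 0}"
  have down: "x \<in> P" if "y \<in> P" "x \<le> y" for x y
    using monoD[OF assms that(2)] that(1) unfolding P_def by simp
  consider "P = {}" | "\<not> bdd_above P" | "P \<noteq> {}" "bdd_above P" by blast
  then show ?thesis
  proof cases
    case 1
    then show ?thesis unfolding P_def by (metis mem_Collect_eq empty_iff linear)
  next
    case 2
    have "x \<in> P" for x
    proof -
      obtain y where "y \<in> P" "x \<le> y" using 2 unfolding bdd_above_def by (meson linear)
      then show ?thesis by (rule down)
    qed
    then show ?thesis unfolding P_def by blast
  next
    case 3
    have below: "d x \<le> 0" if "x < Sup P" for x
    proof -
      obtain y where "y \<in> P" "x < y" using less_cSup_iff[OF 3] \<open>x < Sup P\<close> by blast
      then show ?thesis using down[of y x] unfolding P_def by simp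
    qed
    have above: "0 \<le> d x" if "Sup P < x" for x
      using cSup_upper[OF _ 3(2), of x] that unfolding P_def by force
    show ?thesis
    proof (intro exI allI impI)
      fix a b assume "Sup P \<notin> {a<..<b}"
      then have "b \<le> Sup P \<or> Sup P \<le> a" by auto
      then show "(\<forall>x\<in>{a<..<b}. d x \<le> 0) \<or> (\<forall>x\<in>{a<..<b}. 0 \<le> d x)"
        using below above by fastforce
    qed
  qed
qed

lemma pw_affine_at_most_min_affine:
  fixes h :: "real \<Rightarrow> real"
  assumes h: "pw_affine_at_most N h"
    and mono: "mono (\<lambda>x. h x - (s * x + \<beta>))"
  shows "pw_affine_at_most (Suc N) (\<lambda>x. min (h x) (s * x + \<beta>))"
proof -
  obtain B where B: "finite B" "card B \<le> N"
    "\<And>a b. a < b \<Longrightarrow> {a<..<b} \<inter> B = {} \<Longrightarrow> \<exists>c d. \<forall>x\<in>{a<..<b}. h x = c * x + d"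
    using h unfolding pw_affine_at_most_def by blast
  obtain x0 where x0: "\<And>a b. x0 \<notin> {a<..<b} \<Longrightarrow>
      (\<forall>x\<in>{a<..<b}. h x - (s * x + \<beta>) \<le> 0) \<or> (\<forall>x\<in>{a<..<b}. 0 \<le> h x - (s * x + \<beta>))"
    using mono_sign_constant_off_point[OF mono] by blast
  show ?thesis
    unfolding pw_affine_at_most_def
  proof (intro exI[of _ "insert x0 B"] conjI allI impI)
    show "finite (insert x0 B)" "card (insert x0 B) \<le> Suc N"
      using B by (auto simp: card_insert_if)
    fix a b assume ab: "a < b \<and> {a<..<b} \<inter> insert x0 B = {}"
    then obtain c d where "\<forall>x\<in>{a<..<b}. h x = c * x + d" using B(3) by blast
    moreover from ab have "x0 \<notin> {a<..<b}" by blast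
    ultimately show "\<exists>c d. \<forall>x\<in>{a<..<b}. min (h x) (s * x + \<beta>) = c * x + d"
      using x0 by (metis diff_ge_0_iff_ge diff_le_0_iff_le min.absorb1 min.absorb2)
  qed
qed

lemma pw_affine_at_most_Min_lines:
  fixes \<beta> :: "real \<Rightarrow> real"
  assumes "finite S" "S \<noteq> {}"
  shows "pw_affine_at_most (card S - 1) (\<lambda>x. Min ((\<lambda>s. s * x + \<beta> s) ` S))"
  using assms
proof (induction S rule: finite_linorder_min_induct)
  case empty
  then show ?case by simp
next
  case (insert s S)
  show ?case
  proof (cases "S = {}")
    case True
    then show ?thesis unfolding pw_affine_at_most_def by (intro exI[of _ "{}"]) auto
  next
    case False
    define h where "h x = Min ((\<lambda>s. s * x + \<beta> s) ` S)" for x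
    have "mono (\<lambda>x. h x - (s * x + \<beta> s))"
    proof (rule monoI)
      fix x y :: real assume "x \<le> y"
      have "h y \<in> (\<lambda>s. s * y + \<beta> s) ` S"
        unfolding h_def using insert.hyps(1) False by (intro Min_in) auto
      then obtain t where t: "t \<in> S" "h y = t * y + \<beta> t" by blast
      have "h x \<le> t * x + \<beta> t" unfolding h_def using t(1) insert.hyps(1) by simp
      moreover have "(t - s) * x \<le> (t - s) * y"
        using insert.hyps(2) t(1) \<open>x \<le> y\<close> by (intro mult_left_mono) auto
      ultimately show "h x - (s * x + \<beta> s) \<le> h y - (s * y + \<beta> s)"
        using t(2) by (simp add: algebra_simps)
    qed
    from pw_affine_at_most_min_affine[OF _ this] insert.IH[OF False]
    have "pw_affine_at_most (Suc (card S - 1)) (\<lambda>x. min (h x) (s * x + \<beta> s))"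
      unfolding h_def by blast
    moreover have "Suc (card S - 1) = card (insert s S) - 1"
      using insert.hyps False by (auto simp: card_gt_0_iff)
    moreover have "Min ((\<lambda>s. s * x + \<beta> s) ` insert s S) = min (h x) (s * x + \<beta> s)" for x
      using insert.hyps(1) False unfolding h_def by (simp add: min.commute)
    ultimately show ?thesis by simp
  qed
qed

lemma continuous_on_Min:
  fixes f :: "'i \<Rightarrow> 'a::topological_space \<Rightarrow> 'b::linorder_topology"
  assumes "finite I" "I \<noteq> {}" "\<And>i. i \<in> I \<Longrightarrow> continuous_on A (f i)"
  shows "continuous_on A (\<lambda>x. Min ((\<lambda>i. f i x) ` I))"
  using assms
proof (induction I rule: finite_ne_induct)
  case (insert i I)
  then show ?case by (simp add: continuous_on_min)
qed simp

lemma Min_lines_group_by_slope: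
  fixes a b :: "'c \<Rightarrow> real"
  assumes "finite C" "C \<noteq> {}"
  shows "Min ((\<lambda>c. a c * x + b c) ` C) = Min ((\<lambda>s. s * x + Min (b ` {c\<in>C. a c = s})) ` a ` C)"
    (is "Min ?lines = Min ?grouped")
proof (rule antisym)
  have "Min ?lines \<le> s * x + Min (b ` {c\<in>C. a c = s})" if "s \<in> a ` C" for s
  proof -
    have "Min (b ` {c\<in>C. a c = s}) \<in> b ` {c\<in>C. a c = s}"
      using assms(1) \<open>s \<in> a ` C\<close> by (intro Min_in) auto
    then obtain c where c: "c \<in> C" "a c = s" "b c = Min (b ` {c\<in>C. a c = s})" by auto
    have "Min ?lines \<le> a c * x + b c" using assms(1) c(1) by (intro Min_le) auto
    with c show ?thesis by simp
  qed
  then show "Min ?lines \<le> Min ?grouped"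
    using assms by (intro Min.boundedI) auto
  have "Min ?grouped \<le> a c * x + b c" if "c \<in> C" for c
  proof -
    have "Min ?grouped \<le> a c * x + Min (b ` {c'\<in>C. a c' = a c})"
      using assms(1) that by (intro Min_le) auto
    also have "\<dots> \<le> a c * x + b c"
      using assms(1) that by (intro add_left_mono Min_le) auto
    finally show ?thesis .
  qed
  then show "Min ?grouped \<le> Min ?lines"
    using assms by (intro Min.boundedI) auto
qed

definition cycle_edge :: "nat list \<Rightarrow> nat \<Rightarrow> nat \<times> nat" where
  "cycle_edge c t = (c ! t, c ! ((t + 1) mod length c))"

definition edge_multiplicity :: "nat \<times> nat \<Rightarrow> nat list \<Rightarrow> nat" where
  "edge_multiplicity e c = card {t. t < length c \<and> cycle_edge c t = e}"

definition cycle_slope :: "nat \<times> nat \<Rightarrow> nat list \<Rightarrow> real" where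
  "cycle_slope e c = real (edge_multiplicity e c) / real (length c)"

lemma cycle_weight_fun_upd:
  "cycle_weight (r(e := x)) c = real (edge_multiplicity e c) * x + cycle_weight (r(e := 0)) c"
proof -
  have "cycle_weight (r(e := x)) c =
      (\<Sum>t<length c. if cycle_edge c t = e then x else 0) + cycle_weight (r(e := 0)) c"
    unfolding cycle_weight_def sum.distrib[symmetric]
    by (intro sum.cong) (auto simp: cycle_edge_def)
  also have "(\<Sum>t<length c. if cycle_edge c t = e then x else 0) = real (edge_multiplicity e c) * x"
    using sum.inter_filter[of "{..<length c}" "\<lambda>_. x" "\<lambda>t. cycle_edge c t = e"]
    unfolding edge_multiplicity_def by (simp add: lessThan_def)
  finally show ?thesis .
qed

lemma cycle_mean_fun_upd:
  "cycle_mean (r(e := x)) c = cycle_slope e c * x + cycle_mean (r(e := 0)) c"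
  unfolding cycle_mean_def cycle_slope_def
  by (subst cycle_weight_fun_upd) (simp add: add_divide_distrib)

lemma edge_multiplicity_le_1:
  assumes "distinct c"
  shows "edge_multiplicity e c \<le> 1"
  unfolding edge_multiplicity_def One_nat_def
  by (subst card_le_Suc0_iff_eq) (auto simp: cycle_edge_def nth_eq_iff_index_eq[OF assms])

lemma dcycle_set_subset:
  assumes "E \<subseteq> V \<times> V" "is_dcycle E c"
  shows "set c \<subseteq> V"
proof
  fix v assume "v \<in> set c"
  then obtain t where "t < length c" "c ! t = v" by (auto simp: in_set_conv_nth)
  then show "v \<in> V" using assms unfolding is_dcycle_def by blast
qed

lemma dcycle_length_le_card:
  assumes "E \<subseteq> V \<times> V" "finite V" "is_dcycle E c"
  shows "length c \<le> card V"
proof -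
  have "length c = card (set c)"
    using assms(3) by (simp add: is_dcycle_def distinct_card)
  also have "\<dots> \<le> card V"
    using dcycle_set_subset[OF assms(1,3)] assms(2) by (rule card_mono[rotated])
  finally show ?thesis .
qed

lemma finite_dcycles:
  assumes "E \<subseteq> V \<times> V" "finite V"
  shows "finite {c. is_dcycle E c}"
  by (rule finite_subset[OF _ finite_lists_length_le[OF assms(2), of "card V"]])
     (use dcycle_set_subset[OF assms(1)] dcycle_length_le_card[OF assms] in blast)

lemma card_dcycle_slopes_le:
  assumes "E \<subseteq> V \<times> V" "finite V"
  shows "card (cycle_slope e ` {c. is_dcycle E c}) \<le> Suc (card V)"
proof -
  let ?S = "insert 0 ((\<lambda>k. 1 / real k) ` {1..card V})"
  have "cycle_slope e c \<in> ?S" if c: "is_dcycle E c" for c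
  proof -
    have "length c \<in> {1..card V}"
      using c dcycle_length_le_card[OF assms c] by (simp add: is_dcycle_def Suc_le_eq)
    moreover have "edge_multiplicity e c = 0 \<or> edge_multiplicity e c = 1"
      using c edge_multiplicity_le_1[of c e] unfolding is_dcycle_def by linarith
    ultimately show ?thesis
      unfolding cycle_slope_def by auto
  qed
  then have "card (cycle_slope e ` {c. is_dcycle E c}) \<le> card ?S"
    by (intro card_mono) auto
  also have "\<dots> \<le> Suc (card V)"
    using card_image_le[of "{1..card V}" "\<lambda>k. 1 / real k"] by (simp add: card_insert_if)
  finally show ?thesis .
qed

lemma min_cycle_mean_fun_upd_Min_lines:
  assumes "E \<subseteq> V \<times> V" "finite V" "\<exists>c. is_dcycle E c"
  obtains S \<beta> where "finite S" "S \<noteq> {}" "card S \<le> Suc (card V)"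
    "\<And>x. min_cycle_mean E (r(e := x)) = Min ((\<lambda>s. s * x + \<beta> s) ` S)"
proof
  define C where "C = {c. is_dcycle E c}"
  define \<beta> where "\<beta> s = Min (cycle_mean (r(e := 0)) ` {c\<in>C. cycle_slope e c = s})" for s
  have C: "finite C" "C \<noteq> {}"
    using finite_dcycles[OF assms(1,2)] assms(3) unfolding C_def by auto
  then show "finite (cycle_slope e ` C)" "cycle_slope e ` C \<noteq> {}" by auto
  show "card (cycle_slope e ` C) \<le> Suc (card V)"
    using card_dcycle_slopes_le[OF assms(1,2)] unfolding C_def .
  fix x
  have "{cycle_mean (r(e := x)) c |c. is_dcycle E c} =
      (\<lambda>c. cycle_slope e c * x + cycle_mean (r(e := 0)) c) ` C"
    using cycle_mean_fun_upd[of r e x] unfolding C_def by auto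
  then have "min_cycle_mean E (r(e := x)) =
      Min ((\<lambda>c. cycle_slope e c * x + cycle_mean (r(e := 0)) c) ` C)"
    unfolding min_cycle_mean_def by simp
  also have "\<dots> = Min ((\<lambda>s. s * x + \<beta> s) ` cycle_slope e ` C)"
    unfolding \<beta>_def by (rule Min_lines_group_by_slope[OF C])
  finally show "min_cycle_mean E (r(e := x)) = Min ((\<lambda>s. s * x + \<beta> s) ` cycle_slope e ` C)" .
qed

theorem mainTheorem2:
  fixes n :: nat and E :: "(nat \<times> nat) set"
  assumes "E \<subseteq> {1..n} \<times> {1..n}"
    and "\<forall>i \<in> {1..n}. \<exists>j. (i, j) \<in> E"
    and "\<exists>c. is_dcycle E c"
  shows "\<forall>i j (r :: nat \<times> nat \<Rightarrow> real). (i, j) \<in> E \<longrightarrow>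
           continuous_on UNIV (\<lambda>x. min_cycle_mean E (r((i, j) := x))) \<and>
           pw_affine_at_most n (\<lambda>x. min_cycle_mean E (r((i, j) := x)))"
proof (intro allI impI)
  fix i j and r :: "nat \<times> nat \<Rightarrow> real"
  obtain S \<beta> where S: "finite S" "S \<noteq> {}" "card S \<le> Suc n"
    and lines: "\<And>x. min_cycle_mean E (r((i, j) := x)) = Min ((\<lambda>s. s * x + \<beta> s) ` S)"
    using min_cycle_mean_fun_upd_Min_lines[OF assms(1) finite_atLeastAtMost assms(3),
        where r = r and e = "(i, j)"] by auto
  show "continuous_on UNIV (\<lambda>x. min_cycle_mean E (r((i, j) := x))) \<and>
      pw_affine_at_most n (\<lambda>x. min_cycle_mean E (r((i, j) := x)))"
    unfolding lines
  proof
    show "continuous_on UNIV (\<lambda>x. Min ((\<lambda>s. s * x + \<beta> s) ` S))"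
      by (rule continuous_on_Min[OF S(1,2)]) (simp add: continuous_on_add continuous_on_mult_right)
    show "pw_affine_at_most n (\<lambda>x. Min ((\<lambda>s. s * x + \<beta> s) ` S))"
      by (rule pw_affine_at_most_mono[OF pw_affine_at_most_Min_lines[OF S(1,2)]]) (use S(3) in simp)
  qed
qed

end
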